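(* Let $X$ be a finite set with $|X|\ge 3$ and $T\in B(X)$. (M1) If $\mathcal T$ is a minimal triplet cover for $T$, then $2\le\mu(\mathcal T)\le 5$. (M2) If $\mathcal T$ is a minimum triplet cover for $T$, then $2\le\mu(\mathcal T)\le 3$.
   Context: A binary phylogenetic $X$-tree is an unrooted tree whose leaf set is $X$ and all of whose non-leaf vertices are unlabelled of degree three; $B(X)$ is the set of such trees. Pairs in $\binom{X}{2}$ are written $ab$, triples $abc$. Given $\mathcal T\subseteq\binom{X}{2}$, a triple $abc$ supports an interior vertex $v$ if $a,b,c$ lie one in each of the three components of $T$ minus $v$ and $ab,ac,bc\in\mathcal T$; $\mathcal T$ is a triplet cover for $T$ if every interior vertex is supported by some triple. A triplet cover is minimal if removing any single pair from it yields a set that is not a triplet cover for $T$, and minimum if no triplet cover for $T$ has smaller cardinality. The multiplicity $\mu_{\mathcal T}(x)$ of $x\in X$ is the number of elements of $\mathcal T$ containing $x$, and $\mu(\mathcal T)=\min\{\mu_{\mathcal T}(x):x\in X\}$. *)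

theory Defs
  imports Main
begin

definition adj_avoid :: "'v set set \<Rightarrow> 'v set \<Rightarrow> ('v \<times> 'v) set" where
  "adj_avoid E W = {(x, y). {x, y} \<in> E \<and> x \<notin> W \<and> y \<notin> W}"

definition connected_avoid :: "'v set set \<Rightarrow> 'v set \<Rightarrow> 'v \<Rightarrow> 'v \<Rightarrow> bool" where
  "connected_avoid E W x y \<longleftrightarrow> (x, y) \<in> (adj_avoid E W)\<^sup>*"

definition degree :: "'v set set \<Rightarrow> 'v \<Rightarrow> nat" where
  "degree E v = card {e \<in> E. v \<in> e}"

text \<open>A finite tree: connected, and acyclic (every edge is a bridge).\<close>
definition is_tree :: "'v set \<Rightarrow> 'v set set \<Rightarrow> bool" where
  "is_tree V E \<longleftrightarrow> finite V \<and> V \<noteq> {}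
     \<and> (\<forall>e\<in>E. \<exists>a b. e = {a, b} \<and> a \<noteq> b \<and> a \<in> V \<and> b \<in> V)
     \<and> (\<forall>x\<in>V. \<forall>y\<in>V. (x, y) \<in> {(a, b). {a, b} \<in> E}\<^sup>*)
     \<and> (\<forall>e\<in>E. \<forall>a b. e = {a, b} \<longrightarrow> (a, b) \<notin> {(u, w). {u, w} \<in> E - {e}}\<^sup>*)"

definition binary_phylo_tree :: "'v set \<Rightarrow> 'v set \<Rightarrow> 'v set set \<Rightarrow> bool" where
  "binary_phylo_tree X V E \<longleftrightarrow> is_tree V E \<and> X \<subseteq> V
     \<and> (\<forall>v\<in>V. v \<in> X \<longleftrightarrow> degree E v = 1)
     \<and> (\<forall>v\<in>V - X. degree E v = 3)"

definition interior :: "'v set \<Rightarrow> 'v set \<Rightarrow> 'v set" where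
  "interior X V = V - X"

definition pairs :: "'v set \<Rightarrow> 'v set set" where
  "pairs X = {p. p \<subseteq> X \<and> card p = 2}"

text \<open>The triple abc supports the interior vertex v: a,b,c lie in pairwise distinct
  components of T - v (hence one in each of the three components), and ab,ac,bc are in the set.\<close>
definition supports :: "'v set set \<Rightarrow> 'v set set \<Rightarrow> 'v \<Rightarrow> 'v \<Rightarrow> 'v \<Rightarrow> 'v \<Rightarrow> bool" where
  "supports E \<T> v a b c \<longleftrightarrow>
     a \<noteq> v \<and> b \<noteq> v \<and> c \<noteq> v
     \<and> \<not> connected_avoid E {v} a b \<and> \<not> connected_avoid E {v} a c \<and> \<not> connected_avoid E {v} b c
     \<and> {a, b} \<in> \<T> \<and> {a, c} \<in> \<T> \<and> {b, c} \<in> \<T>"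

definition triplet_cover :: "'v set \<Rightarrow> 'v set \<Rightarrow> 'v set set \<Rightarrow> 'v set set \<Rightarrow> bool" where
  "triplet_cover X V E \<T> \<longleftrightarrow> \<T> \<subseteq> pairs X
     \<and> (\<forall>v\<in>interior X V. \<exists>a\<in>X. \<exists>b\<in>X. \<exists>c\<in>X. supports E \<T> v a b c)"

definition minimal_triplet_cover :: "'v set \<Rightarrow> 'v set \<Rightarrow> 'v set set \<Rightarrow> 'v set set \<Rightarrow> bool" where
  "minimal_triplet_cover X V E \<T> \<longleftrightarrow> triplet_cover X V E \<T>
     \<and> (\<forall>p\<in>\<T>. \<not> triplet_cover X V E (\<T> - {p}))"

definition minimum_triplet_cover :: "'v set \<Rightarrow> 'v set \<Rightarrow> 'v set set \<Rightarrow> 'v set set \<Rightarrow> bool" where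
  "minimum_triplet_cover X V E \<T> \<longleftrightarrow> triplet_cover X V E \<T>
     \<and> (\<forall>\<T>'. triplet_cover X V E \<T>' \<longrightarrow> card \<T> \<le> card \<T>')"

definition multiplicity :: "'v set set \<Rightarrow> 'v \<Rightarrow> nat" where
  "multiplicity \<T> x = card {p \<in> \<T>. x \<in> p}"

definition min_multiplicity :: "'v set \<Rightarrow> 'v set set \<Rightarrow> nat" where
  "min_multiplicity X \<T> = Min ((multiplicity \<T>) ` X)"

end

theory Submission
  imports Defs
begin

text \<open>Every leaf x is adjacent to an interior vertex v, and since x is alone in its component
  of T - v, it belongs to every triple supporting v; so x lies in at least two pairs of any triplet
  cover. For the upper bounds, the multiplicities add up to 2|\<T>|, and a binary phylogenetic
  X-tree has at most |X| - 2 interior vertices. Each pair of a minimal cover is needed by some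
  interior vertex, so |\<T>| \<le> 3(|X| - 2) and the average multiplicity is below 6. For a minimum
  cover, fixing a leaf r, the |X| - 1 pairs {r, x} together with one pair of \<T> per interior
  vertex already form a cover, so |\<T>| \<le> 2|X| - 3 and the average multiplicity is below 4.\<close>

abbreviation edge_rel :: "'v set set \<Rightarrow> ('v \<times> 'v) set" where
  "edge_rel F \<equiv> {(a, b). {a, b} \<in> F}"

lemma edge_rel_rtrancl_sym:
  assumes "(x, y) \<in> (edge_rel F)\<^sup>*"
  shows "(y, x) \<in> (edge_rel F)\<^sup>*"
proof -
  have "sym (edge_rel F)" by (auto simp: sym_def insert_commute)
  then show ?thesis using assms by (rule symD[OF sym_rtrancl])
qed

lemma edge_rel_rtrancl_mono: "F \<subseteq> G \<Longrightarrow> (x, y) \<in> (edge_rel F)\<^sup>* \<Longrightarrow> (x, y) \<in> (edge_rel G)\<^sup>*"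
  by (rule rtrancl_mono[THEN subsetD]) auto

lemma connected_avoid_refl: "connected_avoid E W x x"
  by (simp add: connected_avoid_def)

lemma connected_avoid_sym:
  assumes "connected_avoid E W x y"
  shows "connected_avoid E W y x"
proof -
  have "sym (adj_avoid E W)" by (auto simp: sym_def adj_avoid_def insert_commute)
  then show ?thesis using assms unfolding connected_avoid_def by (rule symD[OF sym_rtrancl])
qed

lemma connected_avoid_trans:
  "connected_avoid E W x y \<Longrightarrow> connected_avoid E W y z \<Longrightarrow> connected_avoid E W x z"
  unfolding connected_avoid_def by (rule rtrancl_trans)

lemma is_treeD:
  assumes "is_tree V E"
  shows "finite V"
    and "e \<in> E \<Longrightarrow> \<exists>a b. e = {a, b} \<and> a \<noteq> b \<and> a \<in> V \<and> b \<in> V"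
    and "x \<in> V \<Longrightarrow> y \<in> V \<Longrightarrow> (x, y) \<in> (edge_rel E)\<^sup>*"
    and "{a, b} \<in> E \<Longrightarrow> (a, b) \<notin> (edge_rel (E - {{a, b}}))\<^sup>*"
  using assms unfolding is_tree_def by blast+

lemma finite_edges_tree:
  assumes "is_tree V E"
  shows "finite E"
proof (rule finite_subset)
  show "E \<subseteq> Pow V" using is_treeD(2)[OF assms] by blast
  show "finite (Pow V)" using is_treeD(1)[OF assms] by simp
qed

lemma edge_rel_rtrancl_remove_edge:
  assumes "(x, y) \<in> (edge_rel F)\<^sup>*"
  shows "(x, y) \<in> (edge_rel (F - {{a, b}}))\<^sup>*
    \<or> ((x, a) \<in> (edge_rel (F - {{a, b}}))\<^sup>* \<and> (b, y) \<in> (edge_rel (F - {{a, b}}))\<^sup>*)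
    \<or> ((x, b) \<in> (edge_rel (F - {{a, b}}))\<^sup>* \<and> (a, y) \<in> (edge_rel (F - {{a, b}}))\<^sup>*)"
  using assms
proof (induction rule: rtrancl_induct)
  case base
  then show ?case by simp
next
  case (step z w)
  let ?R = "(edge_rel (F - {{a, b}}))\<^sup>*"
  show ?case
  proof (cases "{z, w} = {a, b}")
    case False
    then have "(z, w) \<in> ?R" using step.hyps(2) by auto
    then show ?thesis using step.IH by (meson rtrancl_trans)
  next
    case True
    then have "(z = a \<and> w = b) \<or> (z = b \<and> w = a)" by (auto simp: doubleton_eq_iff)
    then show ?thesis using step.IH by auto
  qed
qed

lemma far_endpoint_exists:
  assumes "is_tree V E" "e \<in> E"
  shows "\<exists>a\<in>e. (a, r) \<notin> (edge_rel (E - {e}))\<^sup>*"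
proof (rule ccontr)
  assume none: "\<not> (\<exists>a\<in>e. (a, r) \<notin> (edge_rel (E - {e}))\<^sup>*)"
  obtain a b where ab: "e = {a, b}" using is_treeD(2)[OF assms] by blast
  have ar: "(a, r) \<in> (edge_rel (E - {e}))\<^sup>*" and br: "(b, r) \<in> (edge_rel (E - {e}))\<^sup>*"
    using none ab by auto
  have "(a, b) \<in> (edge_rel (E - {e}))\<^sup>*"
    using ar edge_rel_rtrancl_sym[OF br] by (rule rtrancl_trans)
  moreover have "(a, b) \<notin> (edge_rel (E - {{a, b}}))\<^sup>*"
    using is_treeD(4)[OF assms(1)] assms(2) ab by simp
  ultimately show False using ab by simp
qed

lemma far_endpoint_unique:
  assumes t: "is_tree V E" and r: "r \<in> V" and e: "e \<in> E" and e': "e' \<in> E"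
    and a: "a \<in> e" "a \<in> e'"
    and far: "(a, r) \<notin> (edge_rel (E - {e}))\<^sup>*" and far': "(a, r) \<notin> (edge_rel (E - {e'}))\<^sup>*"
  shows "e = e'"
proof (rule ccontr)
  assume ne: "e \<noteq> e'"
  obtain b where b: "e = {a, b}" using is_treeD(2)[OF t e] a(1) by blast
  obtain c where c: "e' = {a, c}" using is_treeD(2)[OF t e'] a(2) by blast
  have bridge: "(a, b) \<notin> (edge_rel (E - {e}))\<^sup>*" using is_treeD(4)[OF t] e b by blast
  have "a \<in> V" using is_treeD(2)[OF t e] a(1) by blast
  then have "(a, r) \<in> (edge_rel E)\<^sup>*" using is_treeD(3)[OF t _ r] by blast
  then have br: "(b, r) \<in> (edge_rel (E - {e}))\<^sup>*"
    using edge_rel_rtrancl_remove_edge[of a r E a b] far bridge b by simp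
  have sub: "E - {e} - {e'} \<subseteq> E - {e'}" "E - {e} - {e'} \<subseteq> E - {e}" by auto
  from edge_rel_rtrancl_remove_edge[OF br, of a c] c
  consider "(b, r) \<in> (edge_rel (E - {e} - {e'}))\<^sup>*"
    | "(b, a) \<in> (edge_rel (E - {e} - {e'}))\<^sup>*"
    | "(a, r) \<in> (edge_rel (E - {e} - {e'}))\<^sup>*"
    by auto
  then show False
  proof cases
    case 1
    have "(a, b) \<in> edge_rel (E - {e'})" using e ne b by auto
    moreover have "(b, r) \<in> (edge_rel (E - {e'}))\<^sup>*"
      using 1 by (rule edge_rel_rtrancl_mono[OF sub(1)])
    ultimately have "(a, r) \<in> (edge_rel (E - {e'}))\<^sup>*" by (rule converse_rtrancl_into_rtrancl)
    then show False using far' by simp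
  next
    case 2
    then have "(b, a) \<in> (edge_rel (E - {e}))\<^sup>*" by (rule edge_rel_rtrancl_mono[OF sub(2)])
    then have "(a, b) \<in> (edge_rel (E - {e}))\<^sup>*" by (rule edge_rel_rtrancl_sym)
    then show False using bridge by simp
  next
    case 3
    then have "(a, r) \<in> (edge_rel (E - {e}))\<^sup>*" by (rule edge_rel_rtrancl_mono[OF sub(2)])
    then show False using far by simp
  qed
qed

text \<open>Sending every edge to its endpoint on the far side from a fixed vertex r is injective
  and misses r.\<close>
lemma card_edges_tree:
  assumes t: "is_tree V E"
  shows "card E + 1 \<le> card V"
proof -
  obtain r where r: "r \<in> V" using t unfolding is_tree_def by blast
  have "\<forall>e\<in>E. \<exists>a. a \<in> e \<and> (a, r) \<notin> (edge_rel (E - {e}))\<^sup>*"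
    using far_endpoint_exists[OF t] by blast
  then obtain f where f: "\<And>e. e \<in> E \<Longrightarrow> f e \<in> e \<and> (f e, r) \<notin> (edge_rel (E - {e}))\<^sup>*"
    by metis
  have "inj_on f E"
  proof (rule inj_onI)
    fix e e' assume ee': "e \<in> E" "e' \<in> E" "f e = f e'"
    show "e = e'"
      by (rule far_endpoint_unique[OF t r ee'(1,2), of "f e"]) (use f ee' in metis)+
  qed
  moreover have "f ` E \<subseteq> V - {r}"
  proof
    fix a assume "a \<in> f ` E"
    then obtain e where e: "e \<in> E" "a = f e" by blast
    then have "a \<in> e" "a \<noteq> r" using f by auto
    then show "a \<in> V - {r}" using is_treeD(2)[OF t e(1)] by blast
  qed
  ultimately have "card E \<le> card (V - {r})"
    using is_treeD(1)[OF t] by (simp add: card_inj_on_le)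
  moreover have "card V > 0" using r is_treeD(1)[OF t] card_gt_0_iff by blast
  ultimately show ?thesis using r by simp
qed

section \<open>Components of a tree minus a vertex\<close>

lemma path_avoids_or_meets_neighbour:
  assumes "(y, z) \<in> (edge_rel E)\<^sup>*" "y \<noteq> v"
  shows "(connected_avoid E {v} y z \<and> z \<noteq> v) \<or> (\<exists>u. {v, u} \<in> E \<and> connected_avoid E {v} y u)"
  using assms(1)
proof (induction rule: rtrancl_induct)
  case base
  then show ?case using assms(2) by (simp add: connected_avoid_refl)
next
  case (step z w)
  show ?case
  proof (cases "connected_avoid E {v} y z \<and> z \<noteq> v")
    case True
    show ?thesis
    proof (cases "w = v")
      case True
      then have "{v, z} \<in> E" using step.hyps(2) by (simp add: insert_commute)
      then show ?thesis using \<open>connected_avoid E {v} y z \<and> z \<noteq> v\<close> by blast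
    next
      case False
      then have "(z, w) \<in> adj_avoid E {v}" using step.hyps(2) True by (simp add: adj_avoid_def)
      moreover have "(y, z) \<in> (adj_avoid E {v})\<^sup>*" using True by (simp add: connected_avoid_def)
      ultimately have "connected_avoid E {v} y w"
        unfolding connected_avoid_def by (simp add: rtrancl.rtrancl_into_rtrancl)
      then show ?thesis using False by simp
    qed
  next
    case False
    then show ?thesis using step.IH by blast
  qed
qed

lemma exists_neighbour_in_component:
  assumes "is_tree V E" "y \<in> V" "v \<in> V" "y \<noteq> v"
  shows "\<exists>u. {v, u} \<in> E \<and> connected_avoid E {v} y u"
  using path_avoids_or_meets_neighbour[OF is_treeD(3)[OF assms(1-3)] assms(4)] by simp

lemma degree_three_neighbours:
  assumes "finite E" "degree E v = 3" "{v, u1} \<in> E" "{v, u2} \<in> E" "{v, u3} \<in> E"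
    "distinct [u1, u2, u3]" "{v, u} \<in> E"
  shows "u \<in> {u1, u2, u3}"
proof -
  have same_edge: "{v, p} = {v, q} \<longleftrightarrow> p = q" for p q by (auto simp: doubleton_eq_iff)
  have "{{v, u1}, {v, u2}, {v, u3}} = {e \<in> E. v \<in> e}"
  proof (rule card_subset_eq)
    show "finite {e \<in> E. v \<in> e}" using assms(1) by simp
    show "{{v, u1}, {v, u2}, {v, u3}} \<subseteq> {e \<in> E. v \<in> e}" using assms(3-5) by simp
    show "card {{v, u1}, {v, u2}, {v, u3}} = card {e \<in> E. v \<in> e}"
      using assms(2,6) by (simp add: degree_def same_edge)
  qed
  then have "{v, u} \<in> {{v, u1}, {v, u2}, {v, u3}}" using assms(7) by simp
  then show ?thesis by (simp only: insert_iff same_edge) simp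
qed

text \<open>Each of the three components of T - v contains a neighbour of v, so any vertex other
  than v lies in the component of one of three pairwise separated vertices.\<close>
lemma degree_three_components:
  assumes t: "is_tree V E" and v: "v \<in> V" "degree E v = 3"
    and V: "a \<in> V" "b \<in> V" "c \<in> V" "y \<in> V"
    and ne: "a \<noteq> v" "b \<noteq> v" "c \<noteq> v" "y \<noteq> v"
    and sep: "\<not> connected_avoid E {v} a b" "\<not> connected_avoid E {v} a c"
      "\<not> connected_avoid E {v} b c"
  shows "connected_avoid E {v} y a \<or> connected_avoid E {v} y b \<or> connected_avoid E {v} y c"
proof -
  have join: "connected_avoid E {v} p q"
    if "connected_avoid E {v} p w" "connected_avoid E {v} q w" for p q w
    using connected_avoid_trans[OF that(1) connected_avoid_sym[OF that(2)]] .
  obtain ua where ua: "{v, ua} \<in> E" "connected_avoid E {v} a ua"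
    using exists_neighbour_in_component[OF t V(1) v(1) ne(1)] by blast
  obtain ub where ub: "{v, ub} \<in> E" "connected_avoid E {v} b ub"
    using exists_neighbour_in_component[OF t V(2) v(1) ne(2)] by blast
  obtain uc where uc: "{v, uc} \<in> E" "connected_avoid E {v} c uc"
    using exists_neighbour_in_component[OF t V(3) v(1) ne(3)] by blast
  obtain u where u: "{v, u} \<in> E" "connected_avoid E {v} y u"
    using exists_neighbour_in_component[OF t V(4) v(1) ne(4)] by blast
  have "ua \<noteq> ub" using join[OF ua(2), of b] ub(2) sep(1) by auto
  moreover have "ua \<noteq> uc" using join[OF ua(2), of c] uc(2) sep(2) by auto
  moreover have "ub \<noteq> uc" using join[OF ub(2), of c] uc(2) sep(3) by auto
  ultimately have "u \<in> {ua, ub, uc}"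
    using degree_three_neighbours[OF finite_edges_tree[OF t] v(2) ua(1) ub(1) uc(1)] u(1) by simp
  then show ?thesis
    using join[OF u(2), of a] join[OF u(2), of b] join[OF u(2), of c] ua(2) ub(2) uc(2) by auto
qed

lemma degree_one_unique_edge:
  assumes "degree E x = 1" "{x, u} \<in> E" "{x, w} \<in> E"
  shows "u = w"
proof -
  have "card {e \<in> E. x \<in> e} = 1" using assms(1) by (simp add: degree_def)
  then obtain s where "{e \<in> E. x \<in> e} = {s}" by (rule card_1_singletonE)
  moreover have "{x, u} \<in> {e \<in> E. x \<in> e}" "{x, w} \<in> {e \<in> E. x \<in> e}"
    using assms(2,3) by simp_all
  ultimately have "{x, u} = {x, w}" by simp
  then show ?thesis by (auto simp: doubleton_eq_iff)
qed

lemma degree_one_component_trivial: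
  assumes "degree E x = 1" "{x, v} \<in> E" "x \<noteq> v" "connected_avoid E {v} x y"
  shows "y = x"
  using assms(4) unfolding connected_avoid_def
proof (cases rule: converse_rtranclE)
  case (step w)
  then have "{x, w} \<in> E" "w \<noteq> v" by (auto simp: adj_avoid_def)
  then show ?thesis using degree_one_unique_edge[OF assms(1,2)] by simp
qed simp

section \<open>Binary phylogenetic trees\<close>

lemma binary_phylo_treeD:
  assumes "binary_phylo_tree X V E"
  shows "is_tree V E" and "X \<subseteq> V"
    and "v \<in> V \<Longrightarrow> v \<in> X \<longleftrightarrow> degree E v = 1"
    and "v \<in> V - X \<Longrightarrow> degree E v = 3"
  using assms unfolding binary_phylo_tree_def by auto

lemma leaf_neighbour_interior:
  assumes b: "binary_phylo_tree X V E" and card: "3 \<le> card X" and x: "x \<in> X"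
  shows "\<exists>v\<in>V - X. {x, v} \<in> E \<and> x \<noteq> v"
proof -
  note t = binary_phylo_treeD(1)[OF b]
  have xV: "x \<in> V" using x binary_phylo_treeD(2)[OF b] by blast
  have dx: "degree E x = 1" using binary_phylo_treeD(3)[OF b xV] x by simp
  then have "card {e \<in> E. x \<in> e} = 1" by (simp add: degree_def)
  then obtain s where "{e \<in> E. x \<in> e} = {s}" by (rule card_1_singletonE)
  then have s: "s \<in> E" "x \<in> s" by auto
  then obtain v where v: "s = {x, v}" "x \<noteq> v" "v \<in> V"
    using is_treeD(2)[OF t s(1)] by (auto simp: insert_commute)
  have xvE: "{x, v} \<in> E" using s v by simp
  have "v \<notin> X"
  proof
    assume "v \<in> X"
    then have dv: "degree E v = 1" using binary_phylo_treeD(3)[OF b v(3)] by simp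
    have "\<not> X \<subseteq> {x, v}"
    proof
      assume "X \<subseteq> {x, v}"
      then have "card X \<le> card {x, v}" by (rule card_mono[rotated]) simp
      then show False using card v(2) by simp
    qed
    then obtain y where y: "y \<in> X" "y \<noteq> x" "y \<noteq> v" by blast
    have "y \<in> V" using y(1) binary_phylo_treeD(2)[OF b] by blast
    then obtain u where u: "{v, u} \<in> E" "connected_avoid E {v} y u"
      using exists_neighbour_in_component[OF t _ v(3) y(3)] by blast
    have "u = x" using degree_one_unique_edge[OF dv u(1), of x] xvE by (simp add: insert_commute)
    then have "connected_avoid E {v} x y" using connected_avoid_sym[OF u(2)] by simp
    then have "y = x" by (rule degree_one_component_trivial[OF dx xvE v(2)])
    then show False using y(2) by simp
  qed
  then show ?thesis using xvE v by blast
qed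

lemma sum_card_pairs_containing:
  assumes "finite A" "\<forall>b\<in>B. b \<subseteq> A \<and> card b = 2"
  shows "(\<Sum>a\<in>A. card {b\<in>B. a \<in> b}) = 2 * card B"
proof -
  have "finite B" using assms by (meson Pow_iff finite_Pow_iff finite_subset subsetI)
  then have "(\<Sum>a\<in>A. card {b\<in>B. a \<in> b}) = (\<Sum>a\<in>A. \<Sum>b\<in>B. if a \<in> b then 1 else 0)"
    by (simp add: sum.inter_filter[symmetric])
  also have "\<dots> = (\<Sum>b\<in>B. \<Sum>a\<in>A. if a \<in> b then 1 else 0)"
    by (rule sum.swap)
  also have "\<dots> = (\<Sum>b\<in>B. card {a\<in>A. a \<in> b})"
    using assms(1) by (simp add: sum.inter_filter[symmetric])
  also have "\<dots> = (\<Sum>b\<in>B. 2)"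
  proof (rule sum.cong)
    fix b assume "b \<in> B"
    then have "{a\<in>A. a \<in> b} = b" using assms(2) by blast
    then show "card {a\<in>A. a \<in> b} = 2" using \<open>b \<in> B\<close> assms(2) by simp
  qed simp
  finally show ?thesis by simp
qed

text \<open>Handshake lemma: leaves contribute 1 and interior vertices 3 to the degree sum, which is
  2|E| \<le> 2|V| - 2.\<close>
lemma card_interior_le:
  assumes b: "binary_phylo_tree X V E"
  shows "card (V - X) + 2 \<le> card X"
proof -
  note t = binary_phylo_treeD(1)[OF b] and XV = binary_phylo_treeD(2)[OF b]
  have finV: "finite V" by (rule is_treeD(1)[OF t])
  have "(\<Sum>v\<in>V. degree E v) = 2 * card E"
    unfolding degree_def
  proof (rule sum_card_pairs_containing[OF finV])
    show "\<forall>e\<in>E. e \<subseteq> V \<and> card e = 2" using is_treeD(2)[OF t] by fastforce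
  qed
  moreover have "(\<Sum>v\<in>V. degree E v) = (\<Sum>v\<in>X. degree E v) + (\<Sum>v\<in>V - X. degree E v)"
    using sum.subset_diff[OF XV finV] by (simp add: add.commute)
  moreover have "(\<Sum>v\<in>X. degree E v) = card X"
  proof -
    have "(\<Sum>v\<in>X. degree E v) = (\<Sum>v\<in>X. 1)"
      using binary_phylo_treeD(3)[OF b] XV by (intro sum.cong) auto
    then show ?thesis by simp
  qed
  moreover have "(\<Sum>v\<in>V - X. degree E v) = 3 * card (V - X)"
    using binary_phylo_treeD(4)[OF b] by simp
  moreover have "card E + 1 \<le> card V" by (rule card_edges_tree[OF t])
  moreover have "card V = card X + card (V - X)"
    using finV XV by (metis card_Diff_subset card_mono finite_subset le_add_diff_inverse)
  ultimately show ?thesis by linarith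
qed

lemma finite_subset_pairs: "finite X \<Longrightarrow> \<T> \<subseteq> pairs X \<Longrightarrow> finite \<T>"
  by (rule finite_subset[of _ "Pow X"]) (auto simp: pairs_def)

lemma two_le_multiplicity:
  assumes "finite \<T>" "{x, p} \<in> \<T>" "{x, q} \<in> \<T>" "p \<noteq> q"
  shows "2 \<le> multiplicity \<T> x"
proof -
  have "card {{x, p}, {x, q}} \<le> card {r \<in> \<T>. x \<in> r}"
    using assms(1-3) by (intro card_mono) simp_all
  moreover have "card {{x, p}, {x, q}} = 2" using assms(4) by (simp add: doubleton_eq_iff)
  ultimately show ?thesis by (simp add: multiplicity_def)
qed

lemma supports_distinct: "supports E \<T> v a b c \<Longrightarrow> a \<noteq> b \<and> a \<noteq> c \<and> b \<noteq> c"
  by (auto simp: supports_def connected_avoid_refl)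

lemma two_le_multiplicity_supports:
  assumes "finite \<T>" "supports E \<T> v a b c" "x \<in> {a, b, c}"
  shows "2 \<le> multiplicity \<T> x"
proof -
  have "{a, b} \<in> \<T>" "{a, c} \<in> \<T>" "{b, c} \<in> \<T>" using assms(2) by (simp_all add: supports_def)
  then have "{b, a} \<in> \<T>" "{c, a} \<in> \<T>" "{c, b} \<in> \<T>" by (simp_all add: insert_commute)
  then show ?thesis
    using assms(3) supports_distinct[OF assms(2)] two_le_multiplicity[OF assms(1)]
      \<open>{a, b} \<in> \<T>\<close> \<open>{a, c} \<in> \<T>\<close> \<open>{b, c} \<in> \<T>\<close> by auto
qed

lemma two_le_multiplicity_triplet_cover:
  assumes b: "binary_phylo_tree X V E" and "3 \<le> card X" "finite X"
    and cov: "triplet_cover X V E \<T>" and x: "x \<in> X"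
  shows "2 \<le> multiplicity \<T> x"
proof -
  note t = binary_phylo_treeD(1)[OF b] and XV = binary_phylo_treeD(2)[OF b]
  have fin: "finite \<T>" using finite_subset_pairs[OF assms(3)] cov by (simp add: triplet_cover_def)
  obtain v where v: "v \<in> V - X" "{x, v} \<in> E" "x \<noteq> v"
    using leaf_neighbour_interior[OF b assms(2) x] by blast
  then obtain a b c where abc: "a \<in> X" "b \<in> X" "c \<in> X" and s: "supports E \<T> v a b c"
    using cov unfolding triplet_cover_def interior_def by blast
  have xV: "x \<in> V" using x XV by blast
  have "connected_avoid E {v} x a \<or> connected_avoid E {v} x b \<or> connected_avoid E {v} x c"
    using degree_three_components[OF t _ binary_phylo_treeD(4)[OF b v(1)] _ _ _ xV _ _ _ v(3)]
      v(1) abc XV s by (auto simp: supports_def)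
  then have "x \<in> {a, b, c}"
    using degree_one_component_trivial[OF _ v(2,3)] binary_phylo_treeD(3)[OF b xV] x by auto
  then show ?thesis by (rule two_le_multiplicity_supports[OF fin s])
qed

lemma card_mult_min_multiplicity_le:
  assumes "finite X" "X \<noteq> {}" "\<T> \<subseteq> pairs X"
  shows "card X * min_multiplicity X \<T> \<le> 2 * card \<T>"
proof -
  have "card X * min_multiplicity X \<T> \<le> (\<Sum>x\<in>X. multiplicity \<T> x)"
    using sum_bounded_below[of X "min_multiplicity X \<T>" "multiplicity \<T>"] assms(1,2)
    by (simp add: min_multiplicity_def)
  also have "\<dots> = 2 * card \<T>"
    unfolding multiplicity_def
    by (rule sum_card_pairs_containing[OF assms(1)]) (use assms(3) in \<open>auto simp: pairs_def\<close>)
  finally show ?thesis .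
qed

section \<open>Size of minimal and minimum triplet covers\<close>

lemma supports_mono: "supports E S v a b c \<Longrightarrow> S \<subseteq> S' \<Longrightarrow> supports E S' v a b c"
  by (auto simp: supports_def)

lemma supports_remove_pair:
  "supports E \<T> v a b c \<Longrightarrow> p \<notin> {{a, b}, {a, c}, {b, c}} \<Longrightarrow> supports E (\<T> - {p}) v a b c"
  by (auto simp: supports_def)

lemma supports_swap12: "supports E \<T> v a b c \<Longrightarrow> supports E \<T> v b a c"
  unfolding supports_def by (auto simp: insert_commute dest: connected_avoid_sym)

lemma supports_swap23: "supports E \<T> v a b c \<Longrightarrow> supports E \<T> v a c b"
  unfolding supports_def by (auto simp: insert_commute dest: connected_avoid_sym)

lemma supports_replace_connected:
  assumes s: "supports E \<T> v a b c" and ra: "connected_avoid E {v} r a" and "r \<noteq> v"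
  shows "supports E {{r, b}, {r, c}, {b, c}} v r b c"
proof -
  have "\<not> connected_avoid E {v} r b"
    using s connected_avoid_trans[OF connected_avoid_sym[OF ra]] by (auto simp: supports_def)
  moreover have "\<not> connected_avoid E {v} r c"
    using s connected_avoid_trans[OF connected_avoid_sym[OF ra]] by (auto simp: supports_def)
  ultimately show ?thesis using s \<open>r \<noteq> v\<close> by (simp add: supports_def)
qed

text \<open>Any vertex r lies in the component of T - v of one vertex of a supporting triple, so the
  other two vertices form a supporting triple with r.\<close>
lemma supports_with_vertex:
  assumes t: "is_tree V E" and v: "v \<in> V" "degree E v = 3" and r: "r \<in> V" "r \<noteq> v"
    and s: "supports E \<T> v a b c" and V: "a \<in> V" "b \<in> V" "c \<in> V"
  shows "\<exists>p q. {p, q} \<subseteq> {a, b, c} \<and> {p, q} \<in> \<T> \<and> supports E {{r, p}, {r, q}, {p, q}} v r p q"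
proof -
  have "connected_avoid E {v} r a \<or> connected_avoid E {v} r b \<or> connected_avoid E {v} r c"
    using s by (intro degree_three_components[OF t v V r(1)]) (simp_all add: supports_def r(2))
  then show ?thesis
  proof (elim disjE)
    assume "connected_avoid E {v} r a"
    then have "supports E {{r, b}, {r, c}, {b, c}} v r b c"
      by (rule supports_replace_connected[OF s _ r(2)])
    then show ?thesis using s by (auto simp: supports_def)
  next
    assume "connected_avoid E {v} r b"
    then have "supports E {{r, a}, {r, c}, {a, c}} v r a c"
      by (rule supports_replace_connected[OF supports_swap12[OF s] _ r(2)])
    then show ?thesis using s by (auto simp: supports_def)
  next
    assume "connected_avoid E {v} r c"
    then have "supports E {{r, a}, {r, b}, {a, b}} v r a b"
      by (rule supports_replace_connected[OF supports_swap12[OF supports_swap23[OF s]] _ r(2)])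
    then show ?thesis using s by (auto simp: supports_def)
  qed
qed

lemma card_minimal_triplet_cover_le:
  assumes finV: "finite V" and m: "minimal_triplet_cover X V E \<T>"
  shows "card \<T> \<le> 3 * card (V - X)"
proof -
  have cov: "triplet_cover X V E \<T>" using m by (simp add: minimal_triplet_cover_def)
  let ?supported = "\<lambda>\<T>' w. \<exists>a\<in>X. \<exists>b\<in>X. \<exists>c\<in>X. supports E \<T>' w a b c"
  have "\<forall>w\<in>V - X. \<exists>S. finite S \<and> card S \<le> 3 \<and> (\<forall>p. p \<notin> S \<longrightarrow> ?supported (\<T> - {p}) w)"
  proof
    fix w assume "w \<in> V - X"
    then obtain a b c where abc: "a \<in> X" "b \<in> X" "c \<in> X" "supports E \<T> w a b c"
      using cov unfolding triplet_cover_def interior_def by blast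
    show "\<exists>S. finite S \<and> card S \<le> 3 \<and> (\<forall>p. p \<notin> S \<longrightarrow> ?supported (\<T> - {p}) w)"
    proof (intro exI conjI allI impI)
      show "card {{a, b}, {a, c}, {b, c}} \<le> 3" by (simp add: card_insert_if)
      fix p assume "p \<notin> {{a, b}, {a, c}, {b, c}}"
      then show "?supported (\<T> - {p}) w" using supports_remove_pair[OF abc(4)] abc(1-3) by blast
    qed simp
  qed
  then obtain S where S: "\<forall>w\<in>V - X. finite (S w) \<and> card (S w) \<le> 3
      \<and> (\<forall>p. p \<notin> S w \<longrightarrow> ?supported (\<T> - {p}) w)"
    by (rule bchoice[THEN exE])
  have "\<T> \<subseteq> (\<Union>w\<in>V - X. S w)"
  proof
    fix p assume "p \<in> \<T>"
    then have "\<not> triplet_cover X V E (\<T> - {p})" using m by (simp add: minimal_triplet_cover_def)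
    moreover have "\<T> - {p} \<subseteq> pairs X" using cov by (auto simp: triplet_cover_def)
    ultimately obtain w where w: "w \<in> V - X" and "\<not> ?supported (\<T> - {p}) w"
      unfolding triplet_cover_def interior_def by blast
    then have "p \<in> S w" using bspec[OF S w] by blast
    then show "p \<in> (\<Union>w\<in>V - X. S w)" using w by blast
  qed
  moreover have "finite (\<Union>w\<in>V - X. S w)" using S finV by (intro finite_UN_I) simp_all
  ultimately have "card \<T> \<le> card (\<Union>w\<in>V - X. S w)" by (rule card_mono[rotated])
  also have "\<dots> \<le> (\<Sum>w\<in>V - X. card (S w))" using finV by (intro card_UN_le) simp
  also have "\<dots> \<le> (\<Sum>w\<in>V - X. 3)" using S by (intro sum_mono) simp
  finally show ?thesis by simp
qed

lemma card_minimum_triplet_cover_le: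
  assumes b: "binary_phylo_tree X V E" and finX: "finite X" and "X \<noteq> {}"
    and m: "minimum_triplet_cover X V E \<T>"
  shows "card \<T> + 3 \<le> 2 * card X"
proof -
  note t = binary_phylo_treeD(1)[OF b] and XV = binary_phylo_treeD(2)[OF b]
  have cov: "triplet_cover X V E \<T>" using m by (simp add: minimum_triplet_cover_def)
  obtain r where r: "r \<in> X" using \<open>X \<noteq> {}\<close> by blast
  have "\<forall>w\<in>V - X. \<exists>P. P \<in> \<T> \<and> (\<exists>p\<in>X. \<exists>q\<in>X. P = {p, q} \<and> supports E {{r, p}, {r, q}, P} w r p q)"
  proof
    fix w assume w: "w \<in> V - X"
    then obtain a b c where abc: "a \<in> X" "b \<in> X" "c \<in> X" and s: "supports E \<T> w a b c"
      using cov unfolding triplet_cover_def interior_def by blast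
    have rw: "r \<in> V" "r \<noteq> w" and wV: "w \<in> V" and abcV: "a \<in> V" "b \<in> V" "c \<in> V"
      using r w abc XV by auto
    obtain p q where "{p, q} \<subseteq> {a, b, c}" "{p, q} \<in> \<T>"
        "supports E {{r, p}, {r, q}, {p, q}} w r p q"
      using supports_with_vertex[OF t wV binary_phylo_treeD(4)[OF b w] rw s abcV] by blast
    then show "\<exists>P. P \<in> \<T> \<and> (\<exists>p\<in>X. \<exists>q\<in>X. P = {p, q} \<and> supports E {{r, p}, {r, q}, P} w r p q)"
      using abc by blast
  qed
  then obtain P where P: "\<forall>w\<in>V - X. P w \<in> \<T>
      \<and> (\<exists>p\<in>X. \<exists>q\<in>X. P w = {p, q} \<and> supports E {{r, p}, {r, q}, P w} w r p q)"
    by (rule bchoice[THEN exE])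
  define \<T>\<^sub>0 where "\<T>\<^sub>0 = (\<lambda>x. {r, x}) ` (X - {r}) \<union> P ` (V - X)"
  have "triplet_cover X V E \<T>\<^sub>0"
    unfolding triplet_cover_def
  proof
    show "\<T>\<^sub>0 \<subseteq> pairs X"
      using r P cov by (auto simp: \<T>\<^sub>0_def pairs_def triplet_cover_def)
    show "\<forall>w\<in>interior X V. \<exists>a\<in>X. \<exists>b\<in>X. \<exists>c\<in>X. supports E \<T>\<^sub>0 w a b c"
    proof
      fix w assume "w \<in> interior X V"
      then obtain p q where pq: "p \<in> X" "q \<in> X" "P w = {p, q}" "w \<in> V - X"
        and s: "supports E {{r, p}, {r, q}, P w} w r p q"
        using bspec[OF P, of w] by (auto simp: interior_def)
      have "r \<noteq> p" "r \<noteq> q" using supports_distinct[OF s] by simp_all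
      then have "{{r, p}, {r, q}, P w} \<subseteq> \<T>\<^sub>0" using pq by (auto simp: \<T>\<^sub>0_def)
      then show "\<exists>a\<in>X. \<exists>b\<in>X. \<exists>c\<in>X. supports E \<T>\<^sub>0 w a b c"
        using supports_mono[OF s] r pq(1,2) by blast
    qed
  qed
  then have "card \<T> \<le> card \<T>\<^sub>0" using m by (simp add: minimum_triplet_cover_def)
  also have "\<dots> \<le> card (X - {r}) + card (V - X)"
    unfolding \<T>\<^sub>0_def using finX is_treeD(1)[OF t]
    by (intro card_Un_le[THEN order_trans] add_mono card_image_le) simp_all
  finally show ?thesis using card_interior_le[OF b] r finX by simp
qed

theorem proposition2:
  fixes X V :: "'v set" and E \<T> :: "'v set set"
  assumes "finite X" and "card X \<ge> 3" and "binary_phylo_tree X V E"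
  shows "(minimal_triplet_cover X V E \<T> \<longrightarrow>
            2 \<le> min_multiplicity X \<T> \<and> min_multiplicity X \<T> \<le> 5)
       \<and> (minimum_triplet_cover X V E \<T> \<longrightarrow>
            2 \<le> min_multiplicity X \<T> \<and> min_multiplicity X \<T> \<le> 3)"
proof -
  have ne: "X \<noteq> {}" using assms(2) by auto
  have lower: "2 \<le> min_multiplicity X \<T>" if cov: "triplet_cover X V E \<T>"
    using two_le_multiplicity_triplet_cover[OF assms(3,2,1) cov] assms(1) ne
    by (simp add: min_multiplicity_def)
  have average: "card X * min_multiplicity X \<T> \<le> 2 * card \<T>" if cov: "triplet_cover X V E \<T>"
    using card_mult_min_multiplicity_le[OF assms(1) ne] cov by (simp add: triplet_cover_def)
  have interior: "card (V - X) + 2 \<le> card X" by (rule card_interior_le[OF assms(3)])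
  have finV: "finite V" by (rule is_treeD(1)[OF binary_phylo_treeD(1)[OF assms(3)]])
  show ?thesis
  proof (intro conjI impI)
    assume m: "minimal_triplet_cover X V E \<T>"
    then have cov: "triplet_cover X V E \<T>" by (simp add: minimal_triplet_cover_def)
    show "2 \<le> min_multiplicity X \<T>" by (rule lower[OF cov])
    have "card X * min_multiplicity X \<T> < card X * 6"
      using average[OF cov] card_minimal_triplet_cover_le[OF finV m] interior by linarith
    then show "min_multiplicity X \<T> \<le> 5" by simp
  next
    assume m: "minimum_triplet_cover X V E \<T>"
    then have cov: "triplet_cover X V E \<T>" by (simp add: minimum_triplet_cover_def)
    show "2 \<le> min_multiplicity X \<T>" by (rule lower[OF cov])
    have "card X * min_multiplicity X \<T> < card X * 4"
      using average[OF cov] card_minimum_triplet_cover_le[OF assms(3,1) ne m] by linarith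
    then show "min_multiplicity X \<T> \<le> 3" by simp
  qed
qed

end
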